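(* Let $a=(a_i)_{i\in\mathbb Z}$ be any sequence of complex numbers and $\widehat a$ its dual sequence. For every Young diagram $\mu$, $\omega(s_{\mu;a})=s_{\mu';\widehat a}$, where $\mu'$ is the transposed diagram.
   Context: $\Lambda$ is the algebra of symmetric functions over $\mathbb C$, with complete homogeneous $h_k$, elementary $e_k$, power sums $\mathbf p_k$, Schur functions $s_\mu$. $\omega:\Lambda\to\Lambda$ is the involutive automorphism with $\omega(h_k)=e_k$ (so $\omega(e_k)=h_k$, $\omega(\mathbf p_k)=(-1)^{k-1}\mathbf p_k$, $\omega(s_\mu)=s_{\mu'}$). For a sequence $a=(a_i)_{i\in\mathbb Z}$ define $h_{k;a}=\sum_{i=1}^k(-1)^{k-i}e_{k-i}(a_1,\dots,a_{k-1})h_i$ for $k\ge1$, $h_{0;a}=1$, $h_{k;a}=0$ for $k<0$; let $(\tau^ra)_i=a_{i+r}$; and set $s_{\mu;a}=\det[h_{\mu_i-i+j;\,\tau^{1-j}a}]_{i,j=1}^N$ for any $N\ge\ell(\mu)$. The dual sequence $\widehat a$ is defined by $\widehat a_i=-a_{1-i}$, $i\in\mathbb Z$. *)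

theory Defs
  imports Complex_Main "HOL-Library.Poly_Mapping" "Jordan_Normal_Form.Determinant"
begin

text \<open>The algebra Lambda of symmetric functions over the complex numbers, realised as the
  polynomial ring C[h_1, h_2, ...] in the algebraically independent generators h_k (k >= 1):
  a monomial is a finitely supported exponent vector nat =>0 nat, where variable number
  k-1 stands for h_k.\<close>

type_synonym sym = "(nat \<Rightarrow>\<^sub>0 nat) \<Rightarrow>\<^sub>0 complex"

definition scal :: "complex \<Rightarrow> sym" where
  "scal c = Poly_Mapping.single 0 c"

definition hh :: "int \<Rightarrow> sym" where
  "hh k = (if k = 0 then 1 else if k < 0 then 0
           else Poly_Mapping.single (Poly_Mapping.single (nat k - 1) 1) 1)"

text \<open>Elementary symmetric functions e_k, determined by e_0 = 1 and
  sum_{i=0}^k (-1)^i h_i e_{k-i} = 0 for k >= 1.\<close>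
primrec elist :: "nat \<Rightarrow> sym list" where
  "elist 0 = [1]"
| "elist (Suc n) = elist n @
     [- (\<Sum>i\<in>{1..Suc n}. (-1) ^ i * hh (int i) * (elist n ! (Suc n - i)))]"

definition ee :: "nat \<Rightarrow> sym" where
  "ee k = elist k ! k"

definition omega :: "sym \<Rightarrow> sym" where
  "omega f = (\<Sum>m\<in>Poly_Mapping.keys f. scal (Poly_Mapping.lookup f m) *
                 (\<Prod>v\<in>Poly_Mapping.keys m. ee (Suc v) ^ Poly_Mapping.lookup m v))"

definition esym_seq :: "(int \<Rightarrow> complex) \<Rightarrow> nat \<Rightarrow> nat \<Rightarrow> complex" where
  "esym_seq a n j = (\<Sum>S\<in>{S. S \<subseteq> {1..int n} \<and> card S = j}. \<Prod>i\<in>S. a i)"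

definition hseq :: "int \<Rightarrow> (int \<Rightarrow> complex) \<Rightarrow> sym" where
  "hseq k a = (if k = 0 then 1 else if k < 0 then 0
     else (\<Sum>i\<in>{1..nat k}. scal ((-1) ^ (nat k - i) * esym_seq a (nat k - 1) (nat k - i))
                               * hh (int i)))"

definition shift :: "int \<Rightarrow> (int \<Rightarrow> complex) \<Rightarrow> int \<Rightarrow> complex" where
  "shift r a = (\<lambda>i. a (i + r))"

definition dual_seq :: "(int \<Rightarrow> complex) \<Rightarrow> int \<Rightarrow> complex" where
  "dual_seq a = (\<lambda>i. - a (1 - i))"

definition partition :: "nat list \<Rightarrow> bool" where
  "partition \<mu> \<longleftrightarrow> sorted_wrt (\<ge>) \<mu> \<and> 0 \<notin> set \<mu>"

definition conj_part :: "nat list \<Rightarrow> nat list" where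
  "conj_part \<mu> = (if \<mu> = [] then []
     else map (\<lambda>j. length (filter (\<lambda>p. j \<le> p) \<mu>)) [1..<Suc (hd \<mu>)])"

text \<open>s_{mu;a} = det[h_{mu_i - i + j; tau^{1-j} a}]_{i,j=1..N} with N = length mu
  (0-based indices below).\<close>
definition schur_seq :: "nat list \<Rightarrow> (int \<Rightarrow> complex) \<Rightarrow> sym" where
  "schur_seq \<mu> a = det (mat (length \<mu>) (length \<mu>)
     (\<lambda>(i, j). hseq (int (\<mu> ! i) - int i + int j) (shift (- int j) a)))"

end

theory Submission
  imports Defs "HOL-Computational_Algebra.Polynomial"
begin

(* For a sequence b, the integer-indexed lower unitriangular matrices
   H = (h_{x-y; tau^y b})_{x,y} and E = ((-1)^(x-y) omega(h_{x-y; tau^(1-x) hat b}))_{x,y}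
   are mutually inverse: writing c_j for the coefficients of prod_{y<i<x} (t - b_i), the entry
   H_{xy} is sum_j c_j h_{j+1} and E_{xy} is - sum_j (-1)^j c_j e_{j+1}, so the inverse relation
   reduces to a telescoping identity for these root polynomials over subintervals and to the
   relation sum_i (-1)^i h_i e_{k-i} = 0 defining the e_k.
   Jacobi's complementary minor theorem then relates a minor of a finite section of H to the
   complementary minor of E. With b = hat a, M = mu_1 and N = length mu, the rows
   mu'_{M-r} + r (r < M) and the columns M + q - mu_{q+1} (q < N) partition {0..<M+N}; the
   minor of H on these rows and its first M columns is s_{mu'; hat a} with rows and columns
   reversed, and the complementary minor of E is omega(s_{mu;a}) transposed, with signs
   (-1)^(i+j) attached. The signs cancel. *)

section \<open>The homomorphism omega and the elementary symmetric functions\<close>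

interpretation scal: comm_ring_hom scal
  by unfold_locales (simp_all add: scal_def single_add mult_single)

definition omega_monomial :: "(nat \<Rightarrow>\<^sub>0 nat) \<Rightarrow> sym" where
  "omega_monomial m = (\<Prod>v\<in>Poly_Mapping.keys m. ee (Suc v) ^ Poly_Mapping.lookup m v)"

lemma omega_monomial_superset:
  assumes "finite K" "Poly_Mapping.keys m \<subseteq> K"
  shows "omega_monomial m = (\<Prod>v\<in>K. ee (Suc v) ^ Poly_Mapping.lookup m v)"
  unfolding omega_monomial_def
  by (rule prod.mono_neutral_left) (use assms in \<open>auto simp: in_keys_iff\<close>)

lemma omega_monomial_add: "omega_monomial (m + m') = omega_monomial m * omega_monomial m'"
proof -
  let ?K = "Poly_Mapping.keys m \<union> Poly_Mapping.keys m'"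
  have "omega_monomial (m + m') = (\<Prod>v\<in>?K. ee (Suc v) ^ Poly_Mapping.lookup (m + m') v)"
    by (rule omega_monomial_superset) (simp_all add: keys_add)
  also have "\<dots> = (\<Prod>v\<in>?K. ee (Suc v) ^ Poly_Mapping.lookup m v) *
                  (\<Prod>v\<in>?K. ee (Suc v) ^ Poly_Mapping.lookup m' v)"
    by (simp add: lookup_add power_add prod.distrib)
  also have "\<dots> = omega_monomial m * omega_monomial m'"
    by (simp add: omega_monomial_superset[of ?K m] omega_monomial_superset[of ?K m'])
  finally show ?thesis .
qed

lemma omega_superset:
  assumes "finite K" "Poly_Mapping.keys f \<subseteq> K"
  shows "omega f = (\<Sum>m\<in>K. scal (Poly_Mapping.lookup f m) * omega_monomial m)"
  unfolding omega_def omega_monomial_def[symmetric]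
  by (rule sum.mono_neutral_left) (use assms in \<open>auto simp: in_keys_iff\<close>)

lemma omega_add: "omega (f + g) = omega f + omega g"
proof -
  let ?K = "Poly_Mapping.keys f \<union> Poly_Mapping.keys g"
  have "omega (f + g) = (\<Sum>m\<in>?K. scal (Poly_Mapping.lookup (f + g) m) * omega_monomial m)"
    by (rule omega_superset) (simp_all add: keys_add)
  also have "\<dots> = (\<Sum>m\<in>?K. scal (Poly_Mapping.lookup f m) * omega_monomial m) +
                  (\<Sum>m\<in>?K. scal (Poly_Mapping.lookup g m) * omega_monomial m)"
    by (simp add: lookup_add scal.hom_add distrib_right sum.distrib)
  also have "\<dots> = omega f + omega g"
    by (simp add: omega_superset[of ?K f] omega_superset[of ?K g])
  finally show ?thesis .
qed

lemma omega_0 [simp]: "omega 0 = 0"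
  by (simp add: omega_def)

lemma omega_monomial_0 [simp]: "omega_monomial 0 = 1"
  by (simp add: omega_monomial_def)

lemma omega_single: "omega (Poly_Mapping.single m c) = scal c * omega_monomial m"
  by (simp add: omega_def omega_monomial_def)

lemma update_eq_add_single:
  assumes "a \<notin> Poly_Mapping.keys f"
  shows "Poly_Mapping.update a b f = f + Poly_Mapping.single a b"
  by (rule poly_mapping_eqI)
    (use assms in \<open>auto simp: lookup_update lookup_add lookup_single in_keys_iff when_def\<close>)

lemma omega_single_mult:
  "omega (Poly_Mapping.single a b * g) = scal b * omega_monomial a * omega g"
proof (induct g rule: update_induct)
  case const
  then show ?case by simp
next
  case (update f c d)
  then show ?case
    by (simp add: update_eq_add_single distrib_left mult_single omega_add omega_single
        scal.hom_mult omega_monomial_add mult_ac)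
qed

lemma omega_mult: "omega (f * g) = omega f * omega g"
proof (induct f rule: update_induct)
  case const
  then show ?case by simp
next
  case (update f c d)
  then show ?case
    by (simp add: update_eq_add_single distrib_right omega_add omega_single omega_single_mult)
qed

interpretation omega: comm_ring_hom omega
  by unfold_locales (simp_all add: omega_add omega_mult omega_single[of 0 1, simplified])

lemma omega_scal [simp]: "omega (scal c) = scal c"
  by (simp add: scal_def omega_single)

lemma omega_hh: "k > 0 \<Longrightarrow> omega (hh k) = ee (nat k)"
  by (simp add: hh_def omega_single omega_monomial_def)

lemma length_elist [simp]: "length (elist n) = Suc n"
  by (induct n) auto

lemma elist_nth: "k \<le> n \<Longrightarrow> elist n ! k = ee k"
proof (induct n)
  case 0
  then show ?case by (simp add: ee_def)
next
  case (Suc n)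
  then show ?case
    by (cases "k = Suc n") (simp_all add: ee_def nth_append)
qed

lemma ee_0 [simp]: "ee 0 = 1"
  by (simp add: ee_def)

lemma ee_Suc: "ee (Suc n) = - (\<Sum>i\<in>{1..Suc n}. (-1) ^ i * hh (int i) * ee (Suc n - i))"
proof -
  have "ee (Suc n) = - (\<Sum>i\<in>{1..Suc n}. (-1) ^ i * hh (int i) * (elist n ! (Suc n - i)))"
    by (simp add: ee_def nth_append)
  also have "\<dots> = - (\<Sum>i\<in>{1..Suc n}. (-1) ^ i * hh (int i) * ee (Suc n - i))"
    by (intro arg_cong[where f=uminus] sum.cong refl, subst elist_nth) auto
  finally show ?thesis .
qed

lemma hh_ee_convolution:
  "(\<Sum>i<k. hh (1 + int i) * ((-1) ^ (k - 1 - i) * ee (k - i))) = hh (1 + int k) - (-1) ^ k * ee (k + 1)"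
proof -
  let ?S = "\<Sum>i\<in>{1..k}. (-1) ^ i * hh (int i) * ee (Suc k - i)"
  have "{1..Suc k} = insert (Suc k) {1..k}"
    by auto
  then have e: "ee (Suc k) = - ((-1) ^ Suc k * hh (int (Suc k)) + ?S)"
    by (simp add: ee_Suc[of k])
  have "(\<Sum>i<k. hh (1 + int i) * ((-1) ^ (k - 1 - i) * ee (k - i))) =
        (\<Sum>i\<in>{1..k}. hh (int i) * ((-1) ^ (k - i) * ee (Suc k - i)))"
    by (rule sum.reindex_bij_witness[where i="\<lambda>i. i - 1" and j=Suc]) auto
  also have "\<dots> = (-1) ^ k * ?S"
    unfolding sum_distrib_left
    by (rule sum.cong) (auto simp flip: neg_one_power_add_eq_neg_one_power_diff simp: power_add)
  also have "?S = - ee (Suc k) - (-1) ^ Suc k * hh (int (Suc k))"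
    using e by (simp add: algebra_simps)
  also have "(-1) ^ k * (- ee (Suc k) - (-1) ^ Suc k * hh (int (Suc k))) =
      hh (1 + int k) - (-1) ^ k * ee (k + 1)"
    by (simp add: algebra_simps flip: power_add)
  finally show ?thesis .
qed

section \<open>Root polynomials\<close>

definition esym_on :: "(int \<Rightarrow> complex) \<Rightarrow> int set \<Rightarrow> nat \<Rightarrow> complex" where
  "esym_on b F r = (\<Sum>S\<in>{S. S \<subseteq> F \<and> card S = r}. \<Prod>i\<in>S. b i)"

definition root_poly :: "(int \<Rightarrow> complex) \<Rightarrow> int set \<Rightarrow> complex poly" where
  "root_poly b F = (\<Prod>p\<in>F. [:- b p, 1:])"

lemma esym_seq_eq_esym_on: "esym_seq b n r = esym_on b {1..int n} r"
  by (simp add: esym_seq_def esym_on_def)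

lemma esym_on_reindex:
  assumes "inj_on f A"
  shows "esym_on (b \<circ> f) A r = esym_on b (f ` A) r"
proof -
  have inj: "inj_on ((`) f) {S. S \<subseteq> A \<and> card S = r}"
    using inj_on_image_Pow[OF assms] by (rule inj_on_subset) auto
  have img: "(`) f ` {S. S \<subseteq> A \<and> card S = r} = {S. S \<subseteq> f ` A \<and> card S = r}"
  proof (intro equalityI subsetI)
    fix T assume "T \<in> (`) f ` {S. S \<subseteq> A \<and> card S = r}"
    then show "T \<in> {S. S \<subseteq> f ` A \<and> card S = r}"
      using assms by (auto simp: card_image inj_on_subset)
  next
    fix T assume T: "T \<in> {S. S \<subseteq> f ` A \<and> card S = r}"
    define S where "S = {a \<in> A. f a \<in> T}"
    have "T = f ` S"
      using T unfolding S_def by auto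
    moreover have "card (f ` S) = card S"
      using assms by (intro card_image) (auto intro: inj_on_subset simp: S_def)
    ultimately have "card S = r"
      using T by simp
    with \<open>T = f ` S\<close> show "T \<in> (`) f ` {S. S \<subseteq> A \<and> card S = r}"
      unfolding S_def by blast
  qed
  have "esym_on b (f ` A) r = (\<Sum>S\<in>{S. S \<subseteq> A \<and> card S = r}. \<Prod>i\<in>f ` S. b i)"
    unfolding esym_on_def img[symmetric] sum.reindex[OF inj] by (simp add: comp_def)
  also have "\<dots> = esym_on (b \<circ> f) A r"
    unfolding esym_on_def
    by (intro sum.cong refl prod.reindex) (use assms inj_on_subset in auto)
  finally show ?thesis ..
qed

lemma esym_on_uminus: "esym_on (\<lambda>i. - b i) F r = (-1) ^ r * esym_on b F r"
  unfolding esym_on_def sum_distrib_left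
  by (intro sum.cong refl) (simp add: prod_uminus)

lemma degree_root_poly: "finite F \<Longrightarrow> degree (root_poly b F) = card F"
  by (simp add: root_poly_def degree_prod_eq_sum_degree)

lemma coeff_root_poly:
  assumes "finite F" "j \<le> card F"
  shows "coeff (root_poly b F) j = (-1) ^ (card F - j) * esym_on b F (card F - j)"
proof -
  have "root_poly b F = (\<Sum>S\<in>Pow F. (\<Prod>p\<in>S. [:- b p:]) * (\<Prod>p\<in>F - S. monom 1 1))"
    unfolding root_poly_def using prod_add[OF assms(1), of "\<lambda>p. [:- b p:]" "\<lambda>_. monom 1 1"]
    by (simp add: monom_altdef)
  also have "\<dots> = (\<Sum>S\<in>Pow F. monom (\<Prod>p\<in>S. - b p) (card F - card S))"
  proof (intro sum.cong refl)
    fix S assume "S \<in> Pow F"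
    then have "card (F - S) = card F - card S"
      using assms(1) by (simp add: card_Diff_subset finite_subset)
    then show "(\<Prod>p\<in>S. [:- b p:]) * (\<Prod>p\<in>F - S. monom 1 1) = monom (\<Prod>p\<in>S. - b p) (card F - card S)"
      by (simp add: prod_to_poly monom_power smult_monom)
  qed
  finally have "coeff (root_poly b F) j =
      (\<Sum>S\<in>Pow F. if card F - card S = j then \<Prod>p\<in>S. - b p else 0)"
    by (simp add: coeff_sum)
  also have "\<dots> = (\<Sum>S\<in>{S \<in> Pow F. card F - card S = j}. \<Prod>p\<in>S. - b p)"
    by (rule sum.inter_filter[symmetric]) (use assms in simp)
  also have "{S \<in> Pow F. card F - card S = j} = {S. S \<subseteq> F \<and> card S = card F - j}"
    using assms card_mono by fastforce
  finally show ?thesis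
    using esym_on_uminus[of b] by (simp add: esym_on_def)
qed

lemma poly_shift_Suc_linear_mult:
  fixes p :: "'a::comm_ring_1 poly"
  shows "poly_shift (Suc j) ([:c, 1:] * p) = [:c, 1:] * poly_shift (Suc j) p + [:coeff p j:]"
  by (rule poly_eqI) (auto simp: coeff_poly_shift coeff_pCons split: nat.split)

lemma root_poly_interval_insert_top:
  fixes l u :: int
  assumes "l \<le> u + 1"
  shows "root_poly b {l..u + 1} = [:- b (u + 1), 1:] * root_poly b {l..u}"
proof -
  have "{l..u + 1} = insert (u + 1) {l..u}"
    using assms by auto
  then show ?thesis
    by (simp add: root_poly_def)
qed

lemma root_poly_interval_telescope:
  fixes y x :: int
  assumes "y \<le> x"
  shows "(\<Sum>z\<in>{y+1..x}. smult (coeff (root_poly b {y+1..z-1}) j) (root_poly b {z+1..x})) =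
         poly_shift (Suc j) (root_poly b {y+1..x})"
  using assms
proof (induct x rule: int_ge_induct)
  case base
  then show ?case
    by (simp add: root_poly_def poly_shift_1)
next
  case (step x)
  let ?L = "[:- b (x + 1), 1:]"
  have "{y+1..x+1} = insert (x+1) {y+1..x}"
    using step(1) by auto
  then have "(\<Sum>z\<in>{y+1..x+1}. smult (coeff (root_poly b {y+1..z-1}) j) (root_poly b {z+1..x+1})) =
      [:coeff (root_poly b {y+1..x}) j:] +
      (\<Sum>z\<in>{y+1..x}. smult (coeff (root_poly b {y+1..z-1}) j) (?L * root_poly b {z+1..x}))"
    by (simp add: root_poly_def[of b "{}"] root_poly_interval_insert_top)
  also have "\<dots> = [:coeff (root_poly b {y+1..x}) j:] + ?L * poly_shift (Suc j) (root_poly b {y+1..x})"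
    by (simp add: step(2)[symmetric] sum_distrib_left mult_smult_right)
  also have "\<dots> = poly_shift (Suc j) (?L * root_poly b {y+1..x})"
    by (simp only: poly_shift_Suc_linear_mult add.commute)
  also have "?L * root_poly b {y+1..x} = root_poly b {y+1..x+1}"
    using step(1) by (intro root_poly_interval_insert_top[symmetric]) simp
  finally show ?case .
qed

section \<open>The mutually inverse kernels\<close>

definition hcomb :: "complex poly \<Rightarrow> sym" where
  "hcomb p = (\<Sum>j\<le>degree p. scal (coeff p j) * hh (1 + int j))"

definition ecomb :: "complex poly \<Rightarrow> sym" where
  "ecomb p = (\<Sum>j\<le>degree p. (-1) ^ j * scal (coeff p j) * ee (j + 1))"

lemma hcomb_eq_sum: "degree p < K \<Longrightarrow> hcomb p = (\<Sum>j<K. scal (coeff p j) * hh (1 + int j))"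
  unfolding hcomb_def by (rule sum.mono_neutral_left) (auto simp: coeff_eq_0)

lemma ecomb_eq_sum: "degree p < K \<Longrightarrow> ecomb p = (\<Sum>j<K. (-1) ^ j * scal (coeff p j) * ee (j + 1))"
  unfolding ecomb_def by (rule sum.mono_neutral_left) (auto simp: coeff_eq_0)

lemma hcomb_mult_ecomb:
  assumes "degree p < K" "degree q < K"
  shows "hcomb p * ecomb q =
    (\<Sum>i<K. \<Sum>j<K. scal (coeff p i * coeff q j) * hh (1 + int i) * ((-1) ^ j * ee (j + 1)))"
  unfolding hcomb_eq_sum[OF assms(1)] ecomb_eq_sum[OF assms(2)] sum_product
  by (simp add: scal.hom_mult mult_ac)

lemma omega_hcomb: "omega (hcomb p) = (\<Sum>j\<le>degree p. scal (coeff p j) * ee (j + 1))"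
  by (simp add: hcomb_def omega.hom_sum omega.hom_mult omega_hh nat_add_distrib)

lemma sum_antidiagonal_triangle:
  fixes c X Y :: "nat \<Rightarrow> 'a::comm_semiring_1"
  shows "(\<Sum>k<K. c k * (\<Sum>i<k. X i * Y (k - 1 - i))) =
         (\<Sum>i<K. \<Sum>j<K - 1 - i. c (i + j + 1) * X i * Y j)"
proof (induct K)
  case 0
  then show ?case by simp
next
  case (Suc K)
  have "(\<Sum>i<Suc K. \<Sum>j<Suc K - 1 - i. c (i + j + 1) * X i * Y j) =
      (\<Sum>i<K. \<Sum>j<Suc (K - 1 - i). c (i + j + 1) * X i * Y j)"
    by (simp add: Suc_diff_Suc)
  also have "\<dots> = (\<Sum>i<K. (\<Sum>j<K - 1 - i. c (i + j + 1) * X i * Y j) + c K * X i * Y (K - 1 - i))"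
    by (rule sum.cong) auto
  also have "\<dots> = (\<Sum>i<K. \<Sum>j<K - 1 - i. c (i + j + 1) * X i * Y j) +
                  c K * (\<Sum>i<K. X i * Y (K - 1 - i))"
    by (simp add: sum.distrib sum_distrib_left mult.assoc)
  finally show ?case
    using Suc by simp
qed

lemma sum_square_antidiagonal:
  fixes c X Y :: "nat \<Rightarrow> 'a::comm_semiring_1"
  assumes "\<And>m. K \<le> m \<Longrightarrow> c m = 0"
  shows "(\<Sum>i<K. \<Sum>j<K. c (i + j + 1) * X i * Y j) = (\<Sum>k<K. c k * (\<Sum>i<k. X i * Y (k - 1 - i)))"
  unfolding sum_antidiagonal_triangle
  by (intro sum.cong refl sum.mono_neutral_right) (use assms in auto)

lemma hcomb_ecomb_convolution:
  fixes x y :: int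
  assumes "y < x"
  shows "(\<Sum>z\<in>{y+1..x-1}. hcomb (root_poly b {z+1..x-1}) * ecomb (root_poly b {y+1..z-1})) =
         hcomb (root_poly b {y+1..x-1}) - ecomb (root_poly b {y+1..x-1})"
proof -
  define K where "K = nat (x - y)"
  define P where "P = root_poly b {y+1..x-1}"
  define X where "X i = hh (1 + int i)" for i
  define Y where "Y j = (-1) ^ j * ee (j + 1)" for j
  have deg: "degree (root_poly b {l+1..u-1}) < K" if "y \<le> l" "u \<le> x" "l < u" for l u
    using that by (simp add: degree_root_poly K_def)
  have expand: "hcomb (root_poly b {z+1..x-1}) * ecomb (root_poly b {y+1..z-1}) =
      (\<Sum>i<K. \<Sum>j<K. scal (coeff (root_poly b {z+1..x-1}) i * coeff (root_poly b {y+1..z-1}) j) * X i * Y j)"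
    if "z \<in> {y+1..x-1}" for z
    unfolding X_def Y_def using that by (intro hcomb_mult_ecomb deg) auto
  have "(\<Sum>z\<in>{y+1..x-1}. hcomb (root_poly b {z+1..x-1}) * ecomb (root_poly b {y+1..z-1})) =
      (\<Sum>z\<in>{y+1..x-1}. \<Sum>i<K. \<Sum>j<K.
         scal (coeff (root_poly b {z+1..x-1}) i * coeff (root_poly b {y+1..z-1}) j) * X i * Y j)"
    by (intro sum.cong refl expand)
  also have "\<dots> = (\<Sum>i<K. \<Sum>j<K. scal (\<Sum>z\<in>{y+1..x-1}.
         coeff (root_poly b {z+1..x-1}) i * coeff (root_poly b {y+1..z-1}) j) * X i * Y j)"
    by (subst sum.swap, subst sum.swap) (simp add: scal.hom_sum sum_distrib_right)
  also have "\<dots> = (\<Sum>i<K. \<Sum>j<K. scal (coeff P (i + j + 1)) * X i * Y j)"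
    using arg_cong[OF root_poly_interval_telescope[of y "x - 1" b], of "\<lambda>q. coeff q i" for i] assms
    by (simp add: P_def coeff_sum coeff_poly_shift mult.commute add.commute)
  also have "\<dots> = (\<Sum>k<K. scal (coeff P k) * (\<Sum>i<k. X i * Y (k - 1 - i)))"
    using deg[of y x] assms by (intro sum_square_antidiagonal) (simp add: P_def coeff_eq_0)
  also have "\<dots> = (\<Sum>k<K. scal (coeff P k) * (hh (1 + int k) - (-1) ^ k * ee (k + 1)))"
    using hh_ee_convolution by (simp add: X_def Y_def Suc_diff_Suc)
  also have "\<dots> = hcomb P - ecomb P"
    using deg[of y x] assms
    by (simp add: hcomb_eq_sum ecomb_eq_sum P_def right_diff_distrib sum_subtractf mult_ac)
  finally show ?thesis
    unfolding P_def .
qed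

lemma hseq_eq_hcomb:
  assumes "finite F" "card F = nat k - 1" "0 < k"
    and esym: "\<And>r. esym_seq c (nat k - 1) r = esym_on b F r"
  shows "hseq k c = hcomb (root_poly b F)"
proof -
  have "hseq k c = (\<Sum>i\<in>{1..nat k}. scal ((-1) ^ (nat k - i) * esym_on b F (nat k - i)) * hh (int i))"
    unfolding hseq_def esym using assms(3) by simp
  also have "\<dots> = (\<Sum>j<nat k. scal ((-1) ^ (card F - j) * esym_on b F (card F - j)) * hh (1 + int j))"
    using assms(2) by (intro sum.reindex_bij_witness[where i=Suc and j="\<lambda>i. i - 1"]) auto
  also have "\<dots> = (\<Sum>j<nat k. scal (coeff (root_poly b F) j) * hh (1 + int j))"
    using assms(1,2) by (intro sum.cong refl) (simp add: coeff_root_poly)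
  also have "\<dots> = hcomb (root_poly b F)"
    by (rule hcomb_eq_sum[symmetric]) (use assms in \<open>simp add: degree_root_poly\<close>)
  finally show ?thesis .
qed

lemma coeff_root_poly_uminus:
  assumes "finite F"
  shows "coeff (root_poly (\<lambda>i. - b i) F) j = (-1) ^ (card F - j) * coeff (root_poly b F) j"
proof (cases "j \<le> card F")
  case True
  then show ?thesis
    using assms by (simp add: coeff_root_poly esym_on_uminus flip: power_add mult.assoc)
next
  case False
  then show ?thesis
    using assms by (simp add: coeff_eq_0 degree_root_poly)
qed

definition hker :: "(int \<Rightarrow> complex) \<Rightarrow> int \<Rightarrow> int \<Rightarrow> sym" where
  "hker b x y = hseq (x - y) (shift y b)"

definition eker :: "(int \<Rightarrow> complex) \<Rightarrow> int \<Rightarrow> int \<Rightarrow> sym" where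
  "eker b x y = omega (hseq (x - y) (shift (1 - x) (dual_seq b)))"

lemma hker_eq_0: "x < y \<Longrightarrow> hker b x y = 0"
  by (simp add: hker_def hseq_def)

lemma eker_eq_0: "x < y \<Longrightarrow> eker b x y = 0"
  by (simp add: eker_def hseq_def)

lemma hker_diag [simp]: "hker b x x = 1"
  by (simp add: hker_def hseq_def)

lemma eker_diag [simp]: "eker b x x = 1"
  by (simp add: eker_def hseq_def)

lemma hker_eq_hcomb:
  assumes "y < x"
  shows "hker b x y = hcomb (root_poly b {y+1..x-1})"
  unfolding hker_def
proof (rule hseq_eq_hcomb)
  fix r
  have "esym_seq (shift y b) (nat (x - y) - 1) r = esym_on (b \<circ> (\<lambda>l. l + y)) {1..int (nat (x - y) - 1)} r"
    by (simp add: esym_seq_eq_esym_on shift_def comp_def)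
  also have "\<dots> = esym_on b {y+1..x-1} r"
    using assms by (subst esym_on_reindex) (auto simp: inj_on_def ac_simps)
  finally show "esym_seq (shift y b) (nat (x - y) - 1) r = esym_on b {y+1..x-1} r" .
qed (use assms in auto)

lemma eker_eq_ecomb:
  assumes "y < x"
  shows "(-1) ^ nat (x - y) * eker b x y = - ecomb (root_poly b {y+1..x-1})"
proof -
  define F where "F = {y+1..x-1}"
  define n where "n = card F"
  have n: "nat (x - y) = Suc n" "finite F"
    using assms by (simp_all add: n_def F_def)
  have sign: "(-1) ^ Suc n * (-1) ^ (n - j) = - ((-1) ^ j :: sym)" if "j \<le> n" for j
    using that by (simp add: power_add flip: neg_one_power_add_eq_neg_one_power_diff)
  have "eker b x y = omega (hcomb (root_poly (\<lambda>i. - b i) F))"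
    unfolding eker_def
  proof (intro arg_cong[where f=omega] hseq_eq_hcomb)
    fix r
    have "esym_seq (shift (1 - x) (dual_seq b)) (nat (x - y) - 1) r =
        esym_on ((\<lambda>i. - b i) \<circ> (\<lambda>l. x - l)) {1..int (nat (x - y) - 1)} r"
      by (simp add: esym_seq_eq_esym_on shift_def dual_seq_def comp_def)
    also have "\<dots> = esym_on (\<lambda>i. - b i) F r"
      using assms by (subst esym_on_reindex) (auto simp: inj_on_def F_def)
    finally show "esym_seq (shift (1 - x) (dual_seq b)) (nat (x - y) - 1) r = esym_on (\<lambda>i. - b i) F r" .
  qed (use assms in \<open>auto simp: F_def\<close>)
  also have "\<dots> = (\<Sum>j\<le>n. (-1) ^ (n - j) * scal (coeff (root_poly b F) j) * ee (j + 1))"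
    using n by (simp add: omega_hcomb degree_root_poly coeff_root_poly_uminus
        scal.hom_mult scal.hom_power scal.hom_uminus mult.assoc n_def)
  finally have "(-1) ^ nat (x - y) * eker b x y =
      (\<Sum>j\<le>n. ((-1) ^ Suc n * (-1) ^ (n - j)) * scal (coeff (root_poly b F) j) * ee (j + 1))"
    using n by (simp add: sum_distrib_left mult.assoc)
  also have "\<dots> = (\<Sum>j\<le>n. - ((-1) ^ j * scal (coeff (root_poly b F) j) * ee (j + 1)))"
    by (intro sum.cong refl) (simp only: sign atMost_iff mult_minus_left)
  also have "\<dots> = - ecomb (root_poly b F)"
    using n by (simp add: ecomb_def degree_root_poly n_def sum_negf)
  finally show ?thesis
    unfolding F_def .
qed

lemma hker_eker_inverse:
  "(\<Sum>z\<in>{y..x}. hker b x z * ((-1) ^ nat (z - y) * eker b z y)) = (if x = y then 1 else 0)"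
proof (cases "y < x")
  case True
  have "{y..x} = insert x (insert y {y+1..x-1})"
    using True by auto
  then have "(\<Sum>z\<in>{y..x}. hker b x z * ((-1) ^ nat (z - y) * eker b z y)) =
      - ecomb (root_poly b {y+1..x-1}) + hcomb (root_poly b {y+1..x-1}) -
      (\<Sum>z\<in>{y+1..x-1}. hcomb (root_poly b {z+1..x-1}) * ecomb (root_poly b {y+1..z-1}))"
    using True by (simp add: eker_eq_ecomb hker_eq_hcomb sum_negf)
  then show ?thesis
    using True by (simp add: hcomb_ecomb_convolution)
qed auto

definition hmat :: "(int \<Rightarrow> complex) \<Rightarrow> int \<Rightarrow> nat \<Rightarrow> sym mat" where
  "hmat b off n = mat n n (\<lambda>(u, v). hker b (int u - off) (int v - off))"

(* Where eker is nonzero, the sign (-1)^(u+v) equals (-1)^(u-v), without truncated subtraction. *)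
definition emat :: "(int \<Rightarrow> complex) \<Rightarrow> int \<Rightarrow> nat \<Rightarrow> sym mat" where
  "emat b off n = mat n n (\<lambda>(u, v). (-1) ^ (u + v) * eker b (int u - off) (int v - off))"

lemma hmat_carrier: "hmat b off n \<in> carrier_mat n n"
  by (simp add: hmat_def)

lemma emat_carrier: "emat b off n \<in> carrier_mat n n"
  by (simp add: emat_def)

lemma hmat_mult_emat: "hmat b off n * emat b off n = 1\<^sub>m n"
proof (rule eq_matI)
  fix u v assume "u < dim_row (1\<^sub>m n :: sym mat)" "v < dim_col (1\<^sub>m n :: sym mat)"
  then have uv: "u < n" "v < n"
    by simp_all
  define F where "F w = hker b (int u - off) (int w - off) * ((-1) ^ (w + v) * eker b (int w - off) (int v - off))"
    for w
  have "(hmat b off n * emat b off n) $$ (u, v) = (\<Sum>w<n. F w)"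
    using uv by (simp add: hmat_def emat_def F_def scalar_prod_def atLeast0LessThan)
  also have "\<dots> = (\<Sum>w\<in>{v..u}. F w)"
    using uv by (intro sum.mono_neutral_right) (auto simp: F_def hker_eq_0 eker_eq_0)
  also have "\<dots> = (\<Sum>z\<in>{int v - off..int u - off}.
      hker b (int u - off) z * ((-1) ^ nat (z - (int v - off)) * eker b z (int v - off)))"
  proof (rule sum.reindex_bij_witness[where i="\<lambda>z. nat (z + off)" and j="\<lambda>w. int w - off"])
    fix w assume "w \<in> {v..u}"
    then have "(-1::sym) ^ (w + v) = (-1) ^ nat (int w - off - (int v - off))"
      by (simp add: neg_one_power_add_eq_neg_one_power_diff nat_diff_distrib)
    then show "hker b (int u - off) (int w - off) *
        ((-1) ^ nat (int w - off - (int v - off)) * eker b (int w - off) (int v - off)) = F w"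
      by (simp add: F_def)
  qed auto
  also have "\<dots> = 1\<^sub>m n $$ (u, v)"
    using uv by (simp add: hker_eker_inverse)
  finally show "(hmat b off n * emat b off n) $$ (u, v) = 1\<^sub>m n $$ (u, v)" .
qed (simp_all add: hmat_def emat_def)

lemma det_emat: "det (emat b off n) = 1"
proof -
  have "det (emat b off n) = prod_list (diag_mat (emat b off n))"
    by (rule det_lower_triangular[OF _ emat_carrier]) (simp add: emat_def eker_eq_0)
  also have "diag_mat (emat b off n) = map (\<lambda>_. 1) [0..<n]"
    by (simp add: diag_mat_def emat_def flip: mult_2)
  finally show ?thesis
    by (simp add: map_replicate_const prod_list_replicate)
qed

section \<open>Complementary minors\<close>

(* Disjointness and the sizes k and n - k force the two images to partition {..<n}. *)
definition complementary_enums :: "nat \<Rightarrow> nat \<Rightarrow> (nat \<Rightarrow> nat) \<Rightarrow> (nat \<Rightarrow> nat) \<Rightarrow> bool" where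
  "complementary_enums n k s c \<longleftrightarrow> k \<le> n \<and>
     strict_mono_on {..<k} s \<and> s ` {..<k} \<subseteq> {..<n} \<and>
     strict_mono_on {..<n - k} c \<and> c ` {..<n - k} \<subseteq> {..<n} \<and>
     s ` {..<k} \<inter> c ` {..<n - k} = {}"

lemma strict_mono_on_lessThan_eq_id:
  fixes c :: "nat \<Rightarrow> nat"
  assumes mono: "strict_mono_on {..<n} c" and bounded: "c ` {..<n} \<subseteq> {..<n}" and "j < n"
  shows "c j = j"
proof -
  have lower: "i \<le> c i" if "i < n" for i
    using that
  proof (induct i)
    case (Suc i)
    then show ?case
      using strict_mono_onD[OF mono, of i "Suc i"] by simp
  qed simp
  have upper: "c (n - 1 - m) \<le> n - 1 - m" if "m < n" for m
    using that
  proof (induct m)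
    case 0
    then have "c (n - 1) < n"
      using bounded by (simp add: image_subset_iff)
    then show ?case
      by simp
  next
    case (Suc m)
    then have "c (n - 1 - Suc m) < c (n - 1 - m)"
      using strict_mono_onD[OF mono, of "n - 1 - Suc m" "n - 1 - m"] by simp
    then show ?case
      using Suc by simp
  qed
  have j: "n - 1 - (n - 1 - j) = j"
    using \<open>j < n\<close> by simp
  have "c (n - 1 - (n - 1 - j)) \<le> n - 1 - (n - 1 - j)"
    by (rule upper) (use \<open>j < n\<close> in simp)
  then show ?thesis
    unfolding j using lower[OF \<open>j < n\<close>] by simp
qed

lemma complementary_enums_delete_first:
  assumes "complementary_enums (Suc n) (Suc k) s c"
  shows "complementary_enums n k (\<lambda>i. s (Suc i) - 1) (\<lambda>j. if c j < s 0 then c j else c j - 1)"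
proof -
  have s_mono: "s i < s j" if "i < j" "j < Suc k" for i j
    using assms that by (simp add: complementary_enums_def strict_mono_on_def)
  have s_bound: "s i < Suc n" if "i < Suc k" for i
    using assms that by (auto simp: complementary_enums_def)
  have c_mono: "c i < c j" if "i < j" "j < n - k" for i j
    using assms that by (simp add: complementary_enums_def strict_mono_on_def)
  have c_ne: "c j \<noteq> s i" if "i < Suc k" "j < n - k" for i j
    using assms that by (auto simp: complementary_enums_def)
  have c_bound: "c j < Suc n" if "j < n - k" for j
    using assms that by (auto simp: complementary_enums_def)
  define s' where "s' i = s (Suc i) - 1" for i
  define c' where "c' j = (if c j < s 0 then c j else c j - 1)" for j
  have "strict_mono_on {..<k} s'"
  proof (rule strict_mono_onI)
    fix i j assume "i \<in> {..<k}" "j \<in> {..<k}" "i < j"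
    then have "s (Suc i) < s (Suc j)" "s 0 < s (Suc i)"
      using s_mono by simp_all
    then show "s' i < s' j"
      unfolding s'_def by linarith
  qed
  moreover have "s' ` {..<k} \<subseteq> {..<n}"
  proof (rule image_subsetI)
    fix i assume "i \<in> {..<k}"
    then have "s (Suc i) < Suc n" "s 0 < s (Suc i)"
      using s_bound[of "Suc i"] s_mono[of 0 "Suc i"] by simp_all
    then show "s' i \<in> {..<n}"
      unfolding s'_def by simp
  qed
  moreover have "strict_mono_on {..<n - k} c'"
  proof (rule strict_mono_onI)
    fix i j assume "i \<in> {..<n - k}" "j \<in> {..<n - k}" "i < j"
    then have "c i < c j" "c i \<noteq> s 0" "c j \<noteq> s 0"
      using c_mono c_ne[of 0] by simp_all
    then show "c' i < c' j"
      unfolding c'_def by auto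
  qed
  moreover have "c' ` {..<n - k} \<subseteq> {..<n}"
  proof (rule image_subsetI)
    fix j assume "j \<in> {..<n - k}"
    then have "c j \<noteq> s 0" "c j < Suc n" "s 0 < Suc n"
      using c_ne[of 0 j] c_bound[of j] s_bound[of 0] by simp_all
    then show "c' j \<in> {..<n}"
      unfolding c'_def by auto
  qed
  moreover have "s' i \<noteq> c' j" if "i < k" "j < n - k" for i j
  proof -
    have "c j \<noteq> s (Suc i)" "c j \<noteq> s 0" "s 0 < s (Suc i)"
      using c_ne s_mono that by simp_all
    then show "s' i \<noteq> c' j"
      unfolding s'_def c'_def by auto
  qed
  ultimately show ?thesis
    using assms unfolding complementary_enums_def s'_def[symmetric] c'_def[symmetric] by blast
qed

lemma det_first_row_unit:
  fixes W :: "'a::comm_ring_1 mat"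
  assumes W: "W \<in> carrier_mat (Suc n) (Suc n)" and "s < Suc n"
    and row: "\<And>v. v < Suc n \<Longrightarrow> W $$ (0, v) = (if v = s then 1 else 0)"
  shows "det W = (-1) ^ s * det (mat_delete W 0 s)"
proof -
  have "det W = (\<Sum>j<Suc n. W $$ (0, j) * cofactor W 0 j)"
    by (rule laplace_expansion_row[OF W]) simp
  also have "\<dots> = (\<Sum>j<Suc n. if j = s then cofactor W 0 j else 0)"
    by (intro sum.cong refl) (simp add: row)
  also have "\<dots> = cofactor W 0 s"
    using \<open>s < Suc n\<close> by simp
  finally show ?thesis
    by (simp add: cofactor_def)
qed

lemma det_unit_rows:
  fixes W :: "'a::comm_ring_1 mat"
  assumes "W \<in> carrier_mat n n" "complementary_enums n k s c"
    and "\<And>r v. r < k \<Longrightarrow> v < n \<Longrightarrow> W $$ (r, v) = (if v = s r then 1 else 0)"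
  shows "det W = (-1) ^ (\<Sum>r<k. s r - r) * det (mat (n - k) (n - k) (\<lambda>(i, j). W $$ (k + i, c j)))"
  using assms
proof (induct k arbitrary: n W s c)
  case 0
  then have "c j = j" if "j < n" for j
    using strict_mono_on_lessThan_eq_id[of n c] that by (simp add: complementary_enums_def)
  then have "mat n n (\<lambda>(i, j). W $$ (0 + i, c j)) = W"
    by (intro eq_matI) (use 0(1) in simp_all)
  then show ?case
    by simp
next
  case (Suc k)
  obtain n' where n: "n = Suc n'"
    using Suc(3) by (cases n) (auto simp: complementary_enums_def)
  define W' where "W' = mat_delete W 0 (s 0)"
  define s' where "s' i = s (Suc i) - 1" for i
  define c' where "c' j = (if c j < s 0 then c j else c j - 1)" for j
  have enums: "complementary_enums n' k s' c'"
    unfolding s'_def[abs_def] c'_def[abs_def] using complementary_enums_delete_first Suc(3) n by simp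
  have "s 0 < n"
    using Suc(3) by (auto simp: complementary_enums_def)
  have s0: "s 0 < s (Suc i)" if "i < k" for i
    using Suc(3) that by (auto simp: complementary_enums_def strict_mono_on_def)
  have c_ne: "c j \<noteq> s 0" "c j < n" if "j < n' - k" for j
    using Suc(3) that n by (auto simp: complementary_enums_def)
  have c'_skip: "c' j < n'" "(if c' j < s 0 then c' j else Suc (c' j)) = c j" if "j < n' - k" for j
    using enums c_ne(1)[OF that] that by (auto simp: complementary_enums_def c'_def)
  have W'_entry: "W' $$ (i, j) = W $$ (Suc i, if j < s 0 then j else Suc j)" if "i < n'" "j < n'" for i j
    using that Suc(2) n by (simp add: W'_def mat_delete_def)
  have "det W' = (-1) ^ (\<Sum>r<k. s' r - r) * det (mat (n' - k) (n' - k) (\<lambda>(i, j). W' $$ (k + i, c' j)))"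
  proof (rule Suc(1)[OF _ enums])
    show "W' \<in> carrier_mat n' n'"
      using mat_delete_carrier[OF Suc(2)] n by (simp add: W'_def)
    show "W' $$ (r, v) = (if v = s' r then 1 else 0)" if "r < k" "v < n'" for r v
    proof -
      have "W' $$ (r, v) = W $$ (Suc r, if v < s 0 then v else Suc v)"
        using that Suc(3) n by (simp add: W'_entry complementary_enums_def)
      also have "\<dots> = (if v = s' r then 1 else 0)"
        using that Suc(4)[of "Suc r"] s0[of r] n by (auto simp: s'_def)
      finally show ?thesis .
    qed
  qed
  moreover have "mat (n' - k) (n' - k) (\<lambda>(i, j). W' $$ (k + i, c' j)) =
      mat (n - Suc k) (n - Suc k) (\<lambda>(i, j). W $$ (Suc k + i, c j))"
    by (rule eq_matI) (use c'_skip n in \<open>simp_all add: W'_entry\<close>)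
  moreover have "(\<Sum>r<Suc k. s r - r) = s 0 + (\<Sum>r<k. s' r - r)"
    by (subst sum.lessThan_Suc_shift) (simp add: s'_def)
  moreover have "det W = (-1) ^ s 0 * det W'"
    unfolding W'_def using Suc(2,4) \<open>s 0 < n\<close> n by (intro det_first_row_unit) auto
  ultimately show ?case
    by (simp add: power_add)
qed

lemma det_reverse_rows_cols:
  fixes A :: "'a::comm_ring_1 mat"
  assumes A: "A \<in> carrier_mat m m"
  shows "det (mat m m (\<lambda>(i, j). A $$ (m - 1 - i, m - 1 - j))) = det A"
proof -
  define p where "p i = (if i < m then m - 1 - i else i)" for i
  have p: "p permutes {0..<m}"
    by (rule bij_imp_permutes) (auto simp: p_def intro!: bij_betw_byWitness[where f'=p])
  define B where "B = mat m m (\<lambda>(i, j). A $$ (p i, j))"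
  have B: "B \<in> carrier_mat m m"
    by (simp add: B_def)
  have "det B = signof p * det A"
    unfolding B_def by (rule det_permute_rows[OF A p])
  have "mat m m (\<lambda>(i, j). A $$ (m - 1 - i, m - 1 - j)) =
      transpose_mat (mat m m (\<lambda>(i, j). transpose_mat B $$ (p i, j)))"
    using A by (intro eq_matI) (auto simp: B_def p_def)
  then have "det (mat m m (\<lambda>(i, j). A $$ (m - 1 - i, m - 1 - j))) =
      det (mat m m (\<lambda>(i, j). transpose_mat B $$ (p i, j)))"
    by (metis det_transpose mat_carrier)
  also have "\<dots> = signof p * det (transpose_mat B)"
    by (rule det_permute_rows[OF _ p]) (use B in simp)
  also have "\<dots> = signof p * signof p * det A"
    using B \<open>det B = signof p * det A\<close> by (simp add: det_transpose mult.assoc)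
  finally show ?thesis
    by (simp flip: of_int_mult)
qed

lemma det_sign_twist:
  fixes X :: "'a::comm_ring_1 mat"
  assumes X: "X \<in> carrier_mat m m"
  shows "det (mat m m (\<lambda>(i, j). (-1) ^ (f i + g j) * X $$ (i, j))) =
         (-1) ^ (sum f {..<m} + sum g {..<m}) * det X"
proof -
  have "signof p * (\<Prod>i=0..<m. (-1) ^ (f i + g (p i)) * X $$ (i, p i)) =
      (-1) ^ (sum f {..<m} + sum g {..<m}) * (signof p * (\<Prod>i=0..<m. X $$ (i, p i)))"
    if p: "p permutes {0..<m}" for p
  proof -
    have "(\<Sum>i=0..<m. f i + g (p i)) = sum f {..<m} + sum g {..<m}"
      using sum.permute[OF p, of g] by (simp add: sum.distrib atLeast0LessThan comp_def)
    then show ?thesis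
      by (simp add: prod.distrib power_sum[symmetric] mult_ac)
  qed
  then have "det (mat m m (\<lambda>(i, j). (-1) ^ (f i + g j) * X $$ (i, j))) =
      (\<Sum>p\<in>{p. p permutes {0..<m}}. (-1) ^ (sum f {..<m} + sum g {..<m}) *
         (signof p * (\<Prod>i=0..<m. X $$ (i, p i))))"
    by (subst det_def'[of _ m]) (auto intro!: sum.cong prod.cong simp: permutes_in_image)
  then show ?thesis
    by (simp add: det_def'[OF X] sum_distrib_left)
qed

lemma det_complementary_minor:
  fixes A B :: "'a::idom mat"
  assumes A: "A \<in> carrier_mat n n" and B: "B \<in> carrier_mat n n" and AB: "A * B = 1\<^sub>m n"
    and enums: "complementary_enums n m s c"
  shows "det (mat m m (\<lambda>(r, v). A $$ (s r, v))) * det B =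
         (-1) ^ (\<Sum>r<m. s r - r) * det (mat (n - m) (n - m) (\<lambda>(i, j). B $$ (m + i, c j)))"
proof -
  have "m \<le> n" and s_bound: "\<And>r. r < m \<Longrightarrow> s r < n" and c_bound: "\<And>j. j < n - m \<Longrightarrow> c j < n"
    using enums by (auto simp: complementary_enums_def)
  define X1 where "X1 = mat m m (\<lambda>(r, v). A $$ (s r, v))"
  define X2 where "X2 = mat m (n - m) (\<lambda>(r, v). A $$ (s r, m + v))"
  (* Z has the rows s of A on top and the identity below, so Z * B has unit rows on top and
     the rows of B below. *)
  define Z where "Z = four_block_mat X1 X2 (0\<^sub>m (n - m) m) (1\<^sub>m (n - m))"
  have "Z \<in> carrier_mat (m + (n - m)) (m + (n - m))"
    unfolding Z_def by (rule four_block_carrier_mat) (simp_all add: X1_def X2_def)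
  then have Z: "Z \<in> carrier_mat n n"
    using \<open>m \<le> n\<close> by simp
  have Z_entry: "Z $$ (r, w) = (if r < m then A $$ (s r, w) else if r = w then 1 else 0)"
    if "r < n" "w < n" for r w
    using that by (auto simp: Z_def X1_def X2_def)
  have "det Z = det X1"
    unfolding Z_def by (subst det_four_block_mat_lower_left_zero[of _ m _ "n - m"]) (auto simp: X1_def X2_def)
  then have "det (Z * B) = det X1 * det B"
    using Z B by (simp add: det_mult)
  moreover have "det (Z * B) = (-1) ^ (\<Sum>r<m. s r - r) *
      det (mat (n - m) (n - m) (\<lambda>(i, j). (Z * B) $$ (m + i, c j)))"
  proof (rule det_unit_rows)
    show "(Z * B) $$ (r, v) = (if v = s r then 1 else 0)" if "r < m" "v < n" for r v
    proof -
      have "s r < n"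
        by (rule s_bound[OF that(1)])
      have "(Z * B) $$ (r, v) = (\<Sum>w<n. A $$ (s r, w) * B $$ (w, v))"
        using that Z B \<open>m \<le> n\<close> by (simp add: scalar_prod_def atLeast0LessThan Z_entry)
      also have "\<dots> = (A * B) $$ (s r, v)"
        using \<open>s r < n\<close> that A B by (simp add: scalar_prod_def atLeast0LessThan)
      finally show ?thesis
        using \<open>s r < n\<close> that by (simp add: AB)
    qed
  qed (use Z B enums in auto)
  moreover have "(Z * B) $$ (m + i, c j) = B $$ (m + i, c j)" if "i < n - m" "j < n - m" for i j
  proof -
    have "c j < n"
      by (rule c_bound[OF that(2)])
    have "(Z * B) $$ (m + i, c j) = (\<Sum>w<n. Z $$ (m + i, w) * B $$ (w, c j))"
      using that Z B \<open>c j < n\<close> by (simp add: scalar_prod_def atLeast0LessThan)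
    also have "\<dots> = (\<Sum>w<n. if w = m + i then B $$ (w, c j) else 0)"
      using that by (intro sum.cong refl) (simp add: Z_entry)
    also have "\<dots> = B $$ (m + i, c j)"
      using that by simp
    finally show ?thesis .
  qed
  then have "mat (n - m) (n - m) (\<lambda>(i, j). (Z * B) $$ (m + i, c j)) =
      mat (n - m) (n - m) (\<lambda>(i, j). B $$ (m + i, c j))"
    by (intro eq_matI) auto
  ultimately show ?thesis
    by (simp add: X1_def)
qed

section \<open>Schur matrices and conjugate partitions\<close>

definition schur_mat :: "nat list \<Rightarrow> (int \<Rightarrow> complex) \<Rightarrow> sym mat" where
  "schur_mat \<mu> a = mat (length \<mu>) (length \<mu>)
     (\<lambda>(i, j). hseq (int (\<mu> ! i) - int i + int j) (shift (- int j) a))"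

lemma schur_seq_eq_det: "schur_seq \<mu> a = det (schur_mat \<mu> a)"
  by (simp add: schur_seq_def schur_mat_def)

lemma dual_seq_dual_seq [simp]: "dual_seq (dual_seq a) = a"
  by (simp add: dual_seq_def)

definition conj_count :: "nat list \<Rightarrow> nat \<Rightarrow> nat" where
  "conj_count \<mu> j = card {i. i < length \<mu> \<and> j < \<mu> ! i}"

lemma length_conj_part: "\<mu> \<noteq> [] \<Longrightarrow> length (conj_part \<mu>) = hd \<mu>"
  by (simp add: conj_part_def)

lemma nth_conj_part: "\<mu> \<noteq> [] \<Longrightarrow> j < hd \<mu> \<Longrightarrow> conj_part \<mu> ! j = conj_count \<mu> j"
  by (simp del: upt_Suc add: conj_part_def conj_count_def length_filter_conv_card Suc_le_eq)

locale nonempty_partition =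
  fixes \<mu> :: "nat list"
  assumes partition: "partition \<mu>" and nonempty: "\<mu> \<noteq> []"
begin

abbreviation "N \<equiv> length \<mu>"
abbreviation "M \<equiv> hd \<mu>"

lemma nth_antimono:
  assumes "q \<le> q'" "q' < N"
  shows "\<mu> ! q' \<le> \<mu> ! q"
proof (cases "q = q'")
  case False
  then show ?thesis
    using partition assms sorted_wrt_nth_less[of "(\<ge>)" \<mu> q q'] by (simp add: partition_def)
qed simp

lemma nth_pos: "q < N \<Longrightarrow> 0 < \<mu> ! q"
  using partition nth_mem[of q \<mu>] unfolding partition_def by (metis gr0I)

lemma nth_le_hd: "q < N \<Longrightarrow> \<mu> ! q \<le> M"
  using nth_antimono[of 0 q] nonempty by (simp add: hd_conv_nth)

lemma conj_count_le: "conj_count \<mu> j \<le> N"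
proof -
  have "{i. i < N \<and> j < \<mu> ! i} \<subseteq> {..<N}"
    by auto
  then show ?thesis
    unfolding conj_count_def using card_mono[of "{..<N}"] by fastforce
qed

lemma conj_count_antimono: "j \<le> j' \<Longrightarrow> conj_count \<mu> j' \<le> conj_count \<mu> j"
  unfolding conj_count_def by (rule card_mono) auto

lemma less_conj_count_iff:
  assumes "q < N"
  shows "q < conj_count \<mu> j \<longleftrightarrow> j < \<mu> ! q"
proof
  assume "j < \<mu> ! q"
  have "{..q} \<subseteq> {i. i < N \<and> j < \<mu> ! i}"
  proof
    fix i assume "i \<in> {..q}"
    then show "i \<in> {i. i < N \<and> j < \<mu> ! i}"
      using nth_antimono[of i q] assms \<open>j < \<mu> ! q\<close> by simp
  qed
  then have "card {..q} \<le> conj_count \<mu> j"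
    unfolding conj_count_def by (rule card_mono[rotated]) simp
  then show "q < conj_count \<mu> j"
    by simp
next
  assume "q < conj_count \<mu> j"
  show "j < \<mu> ! q"
  proof (rule ccontr)
    assume "\<not> j < \<mu> ! q"
    have "{i. i < N \<and> j < \<mu> ! i} \<subseteq> {..<q}"
    proof
      fix i assume i: "i \<in> {i. i < N \<and> j < \<mu> ! i}"
      show "i \<in> {..<q}"
      proof (rule ccontr)
        assume "i \<notin> {..<q}"
        then have "\<mu> ! i \<le> \<mu> ! q"
          using nth_antimono[of q i] i by simp
        then show False
          using i \<open>\<not> j < \<mu> ! q\<close> by simp
      qed
    qed
    then have "conj_count \<mu> j \<le> card {..<q}"
      unfolding conj_count_def by (rule card_mono[rotated]) simp
    with \<open>q < conj_count \<mu> j\<close> show False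
      by simp
  qed
qed

(* With 1-based partition indices, conj_slot r = mu'_(M-r) + r and part_slot q = M + q - mu_(q+1). *)
definition conj_slot :: "nat \<Rightarrow> nat" where
  "conj_slot r = conj_count \<mu> (M - 1 - r) + r"

definition part_slot :: "nat \<Rightarrow> nat" where
  "part_slot q = M + q - \<mu> ! q"

lemma strict_mono_conj_slot: "strict_mono_on {..<M} conj_slot"
  by (rule strict_mono_onI) (simp add: conj_slot_def add_le_less_mono conj_count_antimono)

lemma conj_slot_bound: "conj_slot ` {..<M} \<subseteq> {..<M + N}"
  using conj_count_le by (auto simp: conj_slot_def intro: add_le_less_mono[THEN order.strict_trans2])

lemma strict_mono_part_slot: "strict_mono_on {..<N} part_slot"
proof (rule strict_mono_onI)
  fix q q' assume "q \<in> {..<N}" "q' \<in> {..<N}" "q < q'"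
  then have "\<mu> ! q' \<le> \<mu> ! q" "\<mu> ! q \<le> M"
    using nth_antimono nth_le_hd by simp_all
  with \<open>q < q'\<close> show "part_slot q < part_slot q'"
    unfolding part_slot_def by linarith
qed

lemma part_slot_bound: "part_slot ` {..<N} \<subseteq> {..<M + N}"
proof (rule image_subsetI)
  fix q assume "q \<in> {..<N}"
  then have "0 < \<mu> ! q" "\<mu> ! q \<le> M" "q < N"
    using nth_pos nth_le_hd by simp_all
  then show "part_slot q \<in> {..<M + N}"
    unfolding part_slot_def by simp
qed

lemma conj_slot_part_slot_disjoint: "conj_slot ` {..<M} \<inter> part_slot ` {..<N} = {}"
proof -
  have "conj_slot r \<noteq> part_slot q" if "r < M" "q < N" for r q
  proof -
    have "q < conj_count \<mu> (M - 1 - r) \<longleftrightarrow> M - 1 - r < \<mu> ! q"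
      using less_conj_count_iff \<open>q < N\<close> by blast
    moreover have "\<mu> ! q \<le> M"
      using nth_le_hd \<open>q < N\<close> by blast
    ultimately show ?thesis
      using \<open>r < M\<close> unfolding conj_slot_def part_slot_def by linarith
  qed
  then show ?thesis
    by blast
qed

lemma complementary_enums_slots: "complementary_enums (M + N) M conj_slot part_slot"
  using strict_mono_conj_slot conj_slot_bound strict_mono_part_slot part_slot_bound
    conj_slot_part_slot_disjoint
  by (simp add: complementary_enums_def)

lemma sum_slots: "(\<Sum>r<M. conj_slot r) + (\<Sum>q<N. part_slot q) = (\<Sum>u<M + N. u)"
proof -
  have inj: "inj_on conj_slot {..<M}" "inj_on part_slot {..<N}"
    using strict_mono_conj_slot strict_mono_part_slot by (simp_all add: strict_mono_on_imp_inj_on)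
  have "card (conj_slot ` {..<M} \<union> part_slot ` {..<N}) = M + N"
    using conj_slot_part_slot_disjoint inj by (simp add: card_Un_disjoint card_image)
  then have cover: "conj_slot ` {..<M} \<union> part_slot ` {..<N} = {..<M + N}"
    using conj_slot_bound part_slot_bound by (intro card_subset_eq) auto
  have "(\<Sum>u<M + N. u) = (\<Sum>u\<in>conj_slot ` {..<M}. u) + (\<Sum>u\<in>part_slot ` {..<N}. u)"
    unfolding cover[symmetric] using conj_slot_part_slot_disjoint by (intro sum.union_disjoint) auto
  also have "\<dots> = (\<Sum>r<M. conj_slot r) + (\<Sum>q<N. part_slot q)"
    using inj by (simp add: sum.reindex)
  finally show ?thesis ..
qed

lemma even_slot_exponent: "even ((\<Sum>r<M. conj_slot r - r) + ((\<Sum>i<N. M + i) + (\<Sum>q<N. part_slot q)))"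
proof -
  have "{..<M + N} = {..<M} \<union> {M..<M + N}"
    by auto
  then have "(\<Sum>u<M + N. u) = (\<Sum>r<M. r) + (\<Sum>u\<in>{M..<M + N}. u)"
    by (metis finite_atLeastLessThan finite_lessThan ivl_disj_int_one(2) sum.union_disjoint)
  also have "(\<Sum>u\<in>{M..<M + N}. u) = (\<Sum>i<N. M + i)"
    using sum.shift_bounds_nat_ivl[of id 0 M N] by (simp add: atLeast0LessThan add.commute)
  finally have "(\<Sum>u<M + N. u) = (\<Sum>r<M. r) + (\<Sum>i<N. M + i)" .
  moreover have "(\<Sum>r<M. conj_slot r - r) = (\<Sum>r<M. conj_slot r) - (\<Sum>r<M. r)"
    by (rule sum_subtractf_nat) (simp add: conj_slot_def)
  moreover have "(\<Sum>r<M. r) \<le> (\<Sum>r<M. conj_slot r)"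
    by (rule sum_mono) (simp add: conj_slot_def)
  ultimately have "(\<Sum>r<M. conj_slot r - r) + ((\<Sum>i<N. M + i) + (\<Sum>q<N. part_slot q)) =
      2 * (\<Sum>i<N. M + i)"
    using sum_slots by linarith
  then show ?thesis
    by (metis dvd_triv_left)
qed

lemma hmat_conj_minor:
  "mat M M (\<lambda>(r, v). hmat b (int M - 1) (M + N) $$ (conj_slot r, v)) =
   mat M M (\<lambda>(i, j). schur_mat (conj_part \<mu>) b $$ (M - 1 - i, M - 1 - j))"
proof (rule eq_matI)
  fix r v assume "r < dim_row (mat M M (\<lambda>(i, j). schur_mat (conj_part \<mu>) b $$ (M - 1 - i, M - 1 - j)))"
    "v < dim_col (mat M M (\<lambda>(i, j). schur_mat (conj_part \<mu>) b $$ (M - 1 - i, M - 1 - j)))"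
  then have rv: "r < M" "v < M"
    by simp_all
  then have "conj_slot r < M + N" "conj_part \<mu> ! (M - 1 - r) = conj_count \<mu> (M - 1 - r)"
    using conj_slot_bound nonempty by (auto simp: nth_conj_part)
  then show "mat M M (\<lambda>(r, v). hmat b (int M - 1) (M + N) $$ (conj_slot r, v)) $$ (r, v) =
      mat M M (\<lambda>(i, j). schur_mat (conj_part \<mu>) b $$ (M - 1 - i, M - 1 - j)) $$ (r, v)"
    using rv nonempty
    by (simp add: hmat_def hker_def schur_mat_def length_conj_part conj_slot_def of_nat_diff algebra_simps)
qed simp_all

lemma emat_part_minor:
  "mat N N (\<lambda>(i, j). emat b (int M - 1) (M + N) $$ (M + i, part_slot j)) =
   mat N N (\<lambda>(i, j). (-1) ^ (M + i + part_slot j) *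
     transpose_mat (map_mat omega (schur_mat \<mu> (dual_seq b))) $$ (i, j))"
proof (rule eq_matI)
  fix i j assume "i < dim_row (mat N N (\<lambda>(i, j). (-1) ^ (M + i + part_slot j) *
      transpose_mat (map_mat omega (schur_mat \<mu> (dual_seq b))) $$ (i, j)))"
    "j < dim_col (mat N N (\<lambda>(i, j). (-1) ^ (M + i + part_slot j) *
      transpose_mat (map_mat omega (schur_mat \<mu> (dual_seq b))) $$ (i, j)))"
  then have ij: "i < N" "j < N"
    by simp_all
  then have "part_slot j < M + N" "\<mu> ! j \<le> M"
    using part_slot_bound nth_le_hd by auto
  then show "mat N N (\<lambda>(i, j). emat b (int M - 1) (M + N) $$ (M + i, part_slot j)) $$ (i, j) =
      mat N N (\<lambda>(i, j). (-1) ^ (M + i + part_slot j) *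
        transpose_mat (map_mat omega (schur_mat \<mu> (dual_seq b))) $$ (i, j)) $$ (i, j)"
    using ij by (simp add: emat_def eker_def schur_mat_def part_slot_def of_nat_diff algebra_simps)
qed simp_all

lemma omega_schur_seq: "omega (schur_seq \<mu> a) = schur_seq (conj_part \<mu>) (dual_seq a)"
proof -
  define b where "b = dual_seq a"
  let ?A = "hmat b (int M - 1) (M + N)" and ?B = "emat b (int M - 1) (M + N)"
  have "det (mat M M (\<lambda>(r, v). ?A $$ (conj_slot r, v))) * det ?B =
      (-1) ^ (\<Sum>r<M. conj_slot r - r) * det (mat N N (\<lambda>(i, j). ?B $$ (M + i, part_slot j)))"
    using det_complementary_minor[OF hmat_carrier emat_carrier hmat_mult_emat complementary_enums_slots]
    by simp
  moreover have "det (mat M M (\<lambda>(r, v). ?A $$ (conj_slot r, v))) = schur_seq (conj_part \<mu>) b"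
    unfolding hmat_conj_minor schur_seq_eq_det
    by (rule det_reverse_rows_cols) (simp add: schur_mat_def length_conj_part nonempty)
  moreover have "det (mat N N (\<lambda>(i, j). ?B $$ (M + i, part_slot j))) =
      (-1) ^ ((\<Sum>i<N. M + i) + (\<Sum>q<N. part_slot q)) * omega (schur_seq \<mu> a)"
  proof -
    have "det (transpose_mat (map_mat omega (schur_mat \<mu> a))) = omega (schur_seq \<mu> a)"
      by (subst det_transpose[where n = N]) (simp_all add: schur_mat_def schur_seq_eq_det omega.hom_det)
    then show ?thesis
      unfolding emat_part_minor b_def by (subst det_sign_twist) (simp_all add: schur_mat_def)
  qed
  ultimately have "schur_seq (conj_part \<mu>) b =
      (-1) ^ ((\<Sum>r<M. conj_slot r - r) + ((\<Sum>i<N. M + i) + (\<Sum>q<N. part_slot q))) *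
      omega (schur_seq \<mu> a)"
    by (simp add: det_emat power_add mult.assoc)
  then show ?thesis
    using even_slot_exponent by (simp add: b_def)
qed

end

theorem theorem4:
  fixes a :: "int \<Rightarrow> complex" and \<mu> :: "nat list"
  assumes "partition \<mu>"
  shows "omega (schur_seq \<mu> a) = schur_seq (conj_part \<mu>) (dual_seq a)"
proof (cases "\<mu> = []")
  case True
  then show ?thesis
    by (simp add: schur_seq_def conj_part_def)
next
  case False
  interpret nonempty_partition \<mu>
    using assms False by unfold_locales
  show ?thesis
    by (rule omega_schur_seq)
qed

end
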